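(* Let $A$ be a unital commutative complex Banach algebra without nontrivial idempotents, equipped with a $G$-graded structure $A=\bigoplus_{g\in G}A_g$ for a finite Abelian group $G$ with neutral element $e$. Suppose some element $a\in A_g$ with $g\neq e$ is invertible. Then the group $G(A)/G(A)_0$ is infinite, where $G(A)$ is the group of invertible elements of $A$ and $G(A)_0$ is the connected component of the identity in $G(A)$.
   Context: A $G$-graded structure on $A$ is a direct sum decomposition $A=\bigoplus_{g\in G}A_g$ into closed linear subspaces with $A_gA_h\subseteq A_{gh}$ for all $g,h\in G$. A nontrivial idempotent is an element $p$ with $p^2=p$, $p\neq 0,1$. *)

theory Defs
  imports "HOL-Analysis.Analysis"
begin

text \<open>Complex scalar
  multiplication is then z x = j z * x.\<close>
definition complex_structure :: "(complex \<Rightarrow> 'a::{real_normed_algebra_1,comm_ring_1}) \<Rightarrow> bool" where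
  "complex_structure j \<longleftrightarrow>
     (\<forall>z w. j (z + w) = j z + j w) \<and>
     (\<forall>z w. j (z * w) = j z * j w) \<and>
     (\<forall>r::real. j (complex_of_real r) = of_real r) \<and>
     (\<forall>z x. norm (j z * x) = cmod z * norm x)"

definition graded_structure ::
  "(complex \<Rightarrow> 'a::{real_normed_algebra_1,comm_ring_1}) \<Rightarrow> ('g::{finite,ab_group_add} \<Rightarrow> 'a set) \<Rightarrow> bool" where
  "graded_structure j Ag \<longleftrightarrow>
     (\<forall>g. closed (Ag g) \<and> 0 \<in> Ag g \<and> (\<forall>x\<in>Ag g. \<forall>y\<in>Ag g. x + y \<in> Ag g)
          \<and> (\<forall>z. \<forall>x\<in>Ag g. j z * x \<in> Ag g)) \<and>
     (\<forall>g h. \<forall>x\<in>Ag g. \<forall>y\<in>Ag h. x * y \<in> Ag (g + h)) \<and>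
     (\<forall>x. \<exists>!f. (\<forall>g. f g \<in> Ag g) \<and> x = (\<Sum>g\<in>UNIV. f g))"

definition invertibles :: "'a::comm_ring_1 set" where
  "invertibles = {x. \<exists>y. x * y = 1}"

definition principal_component :: "'a::{real_normed_algebra_1,comm_ring_1} set" where
  "principal_component = connected_component_set invertibles 1"

definition invertibles_quotient :: "'a::{real_normed_algebra_1,comm_ring_1} set set" where
  "invertibles_quotient = (\<lambda>x. (\<lambda>y. x * y) ` principal_component) ` invertibles"

end

theory Submission
  imports Defs
begin

text \<open>A character \<open>\<psi>\<close> of \<open>G\<close> with \<open>\<psi> g \<noteq> 1\<close> defines an automorphism of \<open>A\<close>, acting on
  \<open>A\<^sub>h\<close> as multiplication by \<open>\<psi> h\<close>, which commutes with \<open>exp\<close>. In a commutative Banach algebra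
  the identity component of the invertibles consists of exponentials, and without nontrivial
  idempotents the roots of unity, and the logarithms of \<open>1\<close>, are scalars. So if \<open>a\<^sup>m\<close> were in
  the identity component, then \<open>a = exp b\<close>, and the automorphism would multiply \<open>exp b\<close> by
  \<open>\<psi> g\<close> while changing \<open>b\<close> only by a scalar without degree-0 part, i.e. not at all.
  Hence the powers of \<open>a\<close> lie in pairwise distinct cosets.\<close>

section \<open>Exponentials in commutative Banach algebras\<close>

lemma exp_add_comm:
  fixes x y :: "'a::{real_normed_algebra_1,comm_ring_1,banach}"
  shows "exp (x + y) = exp x * exp y"
  by (rule exp_add_commuting) (rule mult.commute)

lemma exp_of_nat_mult_comm:
  fixes x :: "'a::{real_normed_algebra_1,comm_ring_1,banach}"
  shows "exp (of_nat n * x) = exp x ^ n"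
  using exp_sum[of "{..<n}" "\<lambda>_. x"] by simp

lemma of_real_inverse_mult_of_nat:
  assumes "n > 0"
  shows "of_real (1 / real n) * (of_nat n :: 'a::real_algebra_1) = 1"
proof -
  have "of_real (1 / real n) * (of_nat n :: 'a) = of_real (1 / real n * real n)"
    by (simp only: of_real_mult of_real_of_nat_eq)
  then show ?thesis
    using assms by simp
qed

lemma exp_nth_root_comm:
  fixes x :: "'a::{real_normed_algebra_1,comm_ring_1,banach}"
  assumes "n > 0"
  shows "exp ((1 / real n) *\<^sub>R x) ^ n = exp x"
proof -
  have "of_nat n * ((1 / real n) *\<^sub>R x) = of_real (1 / real n) * of_nat n * x"
    by (simp add: scaleR_conv_of_real mult_ac)
  then have "of_nat n * ((1 / real n) *\<^sub>R x) = x"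
    by (simp add: of_real_inverse_mult_of_nat [OF assms])
  then show ?thesis
    by (metis exp_of_nat_mult_comm)
qed

lemma norm_exp_minus_one_minus_le:
  fixes x :: "'a::{real_normed_algebra_1,banach}"
  assumes "norm x \<le> 1"
  shows "norm (exp x - 1 - x) \<le> norm x ^ 2"
proof -
  let ?R = "\<lambda>n. inverse (fact (n + 2)) *\<^sub>R (x ^ (n + 2))"
  let ?r = "\<lambda>n. inverse (fact (n + 2)) * (norm x ^ (n + 2))"
  have summable_r: "summable ?r"
    by (rule summable_exp [THEN summable_ignore_initial_segment])
  have R_le_r: "norm (?R n) \<le> ?r n" for n
    using norm_power_ineq[of x "n + 2"] by (simp del: power_Suc add: mult_left_mono)
  have summable_R: "summable (\<lambda>n. norm (?R n))"
    by (rule summable_comparison_test' [OF summable_r, where N = 0])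
      (simp only: real_norm_def abs_norm_cancel R_le_r)
  have "norm (exp x - 1 - x) = norm (\<Sum>n. ?R n)"
    by (subst exp_first_two_terms) simp
  also have "\<dots> \<le> (\<Sum>n. norm (?R n))"
    by (rule summable_norm[OF summable_R])
  also have "\<dots> \<le> (\<Sum>n. ?r n)"
    by (rule suminf_le[OF R_le_r summable_R summable_r])
  also have "\<dots> = exp (norm x) - 1 - norm x"
    using exp_first_two_terms[of "norm x"] by simp
  also have "\<dots> \<le> norm x ^ 2"
    using exp_bound[of "norm x"] assms by simp
  finally show ?thesis .
qed

lemma exp_minus_one_minus_lipschitz:
  fixes x w :: "'a::{real_normed_algebra_1,comm_ring_1,banach}"
  assumes x: "norm x \<le> r" and w: "norm w \<le> r" and r: "r \<le> 1/2"
  shows "norm ((exp x - 1 - x) - (exp w - 1 - w)) \<le> 6 * r * norm (x - w)"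
proof -
  define d where "d = x - w"
  have r0: "0 \<le> r"
    using x norm_ge_zero order_trans by blast
  have d: "norm d \<le> 2 * r"
    using x w norm_triangle_ineq4[of x w] by (simp add: d_def)
  have "exp x = exp w * exp d"
    by (simp add: d_def flip: exp_add_comm)
  then have split: "(exp x - 1 - x) - (exp w - 1 - w) = exp w * (exp d - 1 - d) + (exp w - 1) * d"
    by (simp add: d_def algebra_simps)
  have exp_w: "norm (exp w) \<le> 2"
    using w r by (intro exp_bound_half) simp
  have "norm (exp d - 1 - d) \<le> norm d ^ 2"
    using d r by (intro norm_exp_minus_one_minus_le) simp
  also have "\<dots> \<le> 2 * r * norm d"
    using d by (simp add: power2_eq_square mult_right_mono)
  finally have rem_d: "norm (exp d - 1 - d) \<le> 2 * r * norm d" .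
  have "norm (exp w - 1) \<le> norm (exp w - 1 - w) + norm w"
    using norm_triangle_ineq[of "exp w - 1 - w" w] by simp
  also have "\<dots> \<le> norm w ^ 2 + norm w"
    using norm_exp_minus_one_minus_le[of w] w r by simp
  also have "\<dots> \<le> 2 * r"
  proof -
    have "norm w ^ 2 \<le> r * r"
      using w by (simp add: power2_eq_square mult_mono')
    also have "\<dots> \<le> r"
      using r r0 by (simp add: mult_left_le)
    finally show ?thesis
      using w by simp
  qed
  finally have exp_w_1: "norm (exp w - 1) \<le> 2 * r" .
  have "norm (exp w * (exp d - 1 - d) + (exp w - 1) * d)
      \<le> norm (exp w) * norm (exp d - 1 - d) + norm (exp w - 1) * norm d"
    by (rule order_trans[OF norm_triangle_ineq add_mono[OF norm_mult_ineq norm_mult_ineq]])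
  also have "\<dots> \<le> 2 * (2 * r * norm d) + 2 * r * norm d"
    using r0 by (intro add_mono mult_mono rem_d exp_w_1 exp_w) auto
  finally show ?thesis
    by (simp add: split d_def)
qed

lemma exp_surjective_near_one:
  fixes y :: "'a::{real_normed_algebra_1,comm_ring_1,banach}"
  assumes y: "norm (y - 1) \<le> 1/48"
  shows "y \<in> range exp"
proof -
  define r :: real where "r = 1/24"
  define T where "T b = b - (exp b - y)" for b :: 'a
  have contraction: "dist (T x) (T w) \<le> 1/4 * dist x w" if "x \<in> cball 0 r" "w \<in> cball 0 r" for x w
  proof -
    have "T x - T w = - ((exp x - 1 - x) - (exp w - 1 - w))"
      by (simp add: T_def algebra_simps)
    then have "norm (T x - T w) = norm ((exp x - 1 - x) - (exp w - 1 - w))"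
      by (simp only: norm_minus_cancel)
    also have "\<dots> \<le> 6 * r * norm (x - w)"
      using that by (intro exp_minus_one_minus_lipschitz) (auto simp: r_def)
    finally show ?thesis
      by (simp add: dist_norm r_def)
  qed
  have maps_to: "T ` cball 0 r \<subseteq> cball 0 r"
  proof clarify
    fix x :: 'a assume x: "x \<in> cball 0 r"
    have "norm (T x - (y - 1)) \<le> 1/4 * norm x"
      using contraction[OF x, of 0] by (simp add: r_def T_def dist_norm)
    then have "norm (T x) \<le> 1/4 * r + 1/48"
      using x y norm_triangle_ineq[of "T x - (y - 1)" "y - 1"] by simp
    then show "T x \<in> cball 0 r"
      by (simp add: r_def)
  qed
  obtain b where "T b = b"
    using Banach_fix[of "cball 0 r" "1/4" T] maps_to contraction
    by (auto simp: complete_eq_closed r_def)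
  then show ?thesis
    by (auto simp: T_def)
qed

lemma open_range_exp:
  "open (range (exp :: 'a::{real_normed_algebra_1,comm_ring_1,banach} \<Rightarrow> 'a))"
  unfolding open_dist
proof clarify
  fix b :: 'a
  define \<delta> where "\<delta> = 1 / (48 * (norm (exp (- b)) + 1))"
  have \<delta>: "\<delta> > 0"
    by (simp add: \<delta>_def add_pos_nonneg)
  have "y \<in> range exp" if "dist y (exp b) < \<delta>" for y
  proof -
    have "norm (y * exp (- b) - 1) = norm ((y - exp b) * exp (- b))"
      by (simp add: algebra_simps exp_minus_inverse)
    also have "\<dots> \<le> \<delta> * (norm (exp (- b)) + 1)"
      using that \<delta> norm_mult_ineq[of "y - exp b" "exp (- b)"]
      by (smt (verit, best) dist_norm mult_mono norm_ge_zero)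
    also have "\<dots> = 1/48"
      by (simp add: \<delta>_def add_nonneg_eq_0_iff)
    finally obtain c where c: "exp c = y * exp (- b)"
      using exp_surjective_near_one by (metis rangeE)
    have "exp (c + b) = y"
      by (simp add: exp_add_comm c mult.assoc mult.commute [of "exp (- b)"] exp_minus_inverse)
    then show ?thesis
      by (metis rangeI)
  qed
  with \<delta> show "\<exists>e>0. \<forall>y. dist y (exp b) < e \<longrightarrow> y \<in> range exp"
    by blast
qed

lemma open_image_mult_left_invertible:
  fixes U :: "'a::{real_normed_algebra_1,comm_ring_1} set"
  assumes "x * x' = 1" and "open U"
  shows "open ((\<lambda>e. x * e) ` U)"
proof -
  have "(\<lambda>e. x * e) ` U = (\<lambda>y. x' * y) -` U"
  proof (intro set_eqI iffI)
    fix y assume "y \<in> (\<lambda>e. x * e) ` U"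
    moreover have "x' * (x * e) = e" for e
      using assms(1) by (metis mult.assoc mult.commute mult_1_left)
    ultimately show "y \<in> (\<lambda>y. x' * y) -` U"
      by auto
  next
    fix y assume "y \<in> (\<lambda>y. x' * y) -` U"
    moreover have "y = x * (x' * y)"
      using assms(1) by (simp add: mult.assoc [symmetric])
    ultimately show "y \<in> (\<lambda>e. x * e) ` U"
      by blast
  qed
  moreover have "open ((\<lambda>y. x' * y) -` U)"
    by (intro open_vimage assms(2) continuous_intros)
  ultimately show ?thesis
    by simp
qed

text \<open>The range of \<open>exp\<close> is an open subgroup of the invertibles; its cosets are open too,
  so it is closed in the invertibles and therefore contains the identity component.\<close>

lemma principal_component_subset_range_exp:
  "(principal_component :: 'a::{real_normed_algebra_1,comm_ring_1,banach} set) \<subseteq> range exp"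
proof -
  let ?U = "range (exp :: 'a \<Rightarrow> 'a)"
  let ?V = "\<Union>x\<in>invertibles - ?U. (\<lambda>e. x * e) ` ?U"
  let ?C = "connected_component_set (invertibles :: 'a set) 1"
  have open_V: "open ?V"
    by (auto intro!: open_UN open_image_mult_left_invertible open_range_exp
        simp: invertibles_def)
  have cover: "?C \<subseteq> ?U \<union> ?V"
  proof
    fix x assume "x \<in> ?C"
    then have "x \<in> invertibles"
      using connected_component_subset by blast
    moreover have "x = x * exp 0"
      by simp
    ultimately show "x \<in> ?U \<union> ?V"
      by blast
  qed
  have disjoint: "?U \<inter> ?V = {}"
  proof -
    have "x \<in> ?U" if "exp b = x * exp c" for x b c
    proof -
      have "x = x * exp c * exp (- c)"
        by (simp add: mult.assoc exp_minus_inverse)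
      also have "\<dots> = exp (b + - c)"
        by (simp only: that exp_add_comm)
      finally show ?thesis
        by (metis rangeI)
    qed
    then show ?thesis
      by blast
  qed
  have "1 \<in> ?U \<inter> ?C"
    by (auto simp: invertibles_def intro: range_eqI [of _ _ 0])
  moreover have "?U \<inter> ?C = {} \<or> ?V \<inter> ?C = {}"
    using disjoint by (intro connectedD [OF connected_connected_component open_range_exp open_V _ cover])
      blast
  ultimately have "?V \<inter> ?C = {}"
    by blast
  with cover show ?thesis
    unfolding principal_component_def by blast
qed

lemma infinite_invertibles_quotient:
  fixes a :: "'a::{real_normed_algebra_1,comm_ring_1}"
  assumes "a \<in> invertibles" and "\<And>m. m > 0 \<Longrightarrow> a ^ m \<notin> principal_component"
  shows "infinite (invertibles_quotient :: 'a set set)"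
proof
  obtain a' where a': "a * a' = 1"
    using assms(1) by (auto simp: invertibles_def)
  define coset where "coset m = (\<lambda>y. a ^ m * y) ` (principal_component :: 'a set)" for m
  have "a ^ m \<in> invertibles" for m
    using a' by (auto simp: invertibles_def power_mult_distrib [symmetric] intro: exI [of _ "a' ^ m"])
  then have "range coset \<subseteq> invertibles_quotient"
    unfolding invertibles_quotient_def coset_def by blast
  have "m = m'" if "coset m = coset m'" "m \<le> m'" for m m'
  proof (rule ccontr)
    assume "m \<noteq> m'"
    have "a ^ m' \<in> coset m'"
      unfolding coset_def principal_component_def
      by (rule image_eqI [of _ _ 1]) (auto simp: invertibles_def)
    then have "a ^ m' \<in> coset m"
      using that(1) by simp
    then obtain y where y: "y \<in> principal_component" "a ^ m' = a ^ m * y"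
      by (auto simp: coset_def)
    have inverse_power: "a' ^ m * a ^ m = 1"
      using a' by (simp add: power_mult_distrib [symmetric] mult.commute)
    have "y = a' ^ m * a ^ m'"
      by (simp add: y(2) mult.assoc [symmetric] inverse_power)
    also have "\<dots> = a' ^ m * a ^ m * a ^ (m' - m)"
      using that(2) by (simp add: mult.assoc flip: power_add)
    also have "\<dots> = a ^ (m' - m)"
      by (simp add: inverse_power)
    finally show False
      using assms(2) [of "m' - m"] y(1) that(2) \<open>m \<noteq> m'\<close> by simp
  qed
  then have "inj coset"
    by (metis injI nat_le_linear)
  moreover assume "finite (invertibles_quotient :: 'a set set)"
  ultimately show False
    using \<open>range coset \<subseteq> invertibles_quotient\<close>
    by (meson finite_imageD finite_subset infinite_UNIV_nat)
qed

section \<open>Scalars in algebras without nontrivial idempotents\<close>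

locale complex_structure_algebra =
  fixes j :: "complex \<Rightarrow> 'a::{real_normed_algebra_1,comm_ring_1,banach}"
  assumes complex_structure: "complex_structure j"
begin

lemma j_add: "j (z + w) = j z + j w"
  and j_mult: "j (z * w) = j z * j w"
  and j_of_real: "j (complex_of_real r) = of_real r"
  and norm_j_mult: "norm (j z * x) = cmod z * norm x"
  using complex_structure unfolding complex_structure_def by auto

lemma j_0 [simp]: "j 0 = 0"
  using j_of_real [of 0] by simp

lemma j_1 [simp]: "j 1 = 1"
  using j_of_real [of 1] by simp

lemma norm_j: "norm (j z) = cmod z"
  using norm_j_mult [of z 1] by simp

lemma bounded_linear_j: "bounded_linear j"
proof (rule bounded_linear_intro [where K = 1])
  show "j (r *\<^sub>R z) = r *\<^sub>R j z" for r z
    by (simp add: scaleR_conv_of_real j_mult j_of_real)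
qed (simp_all add: j_add norm_j)

sublocale j: bounded_linear j
  by (rule bounded_linear_j)

lemma j_power: "j (z ^ n) = j z ^ n"
  by (induct n) (simp_all add: j_mult)

lemma j_of_nat: "j (of_nat n) = of_nat n"
  using j_of_real [of "real n"] by simp

lemma j_eq_iff: "j z = j w \<longleftrightarrow> z = w"
  using norm_j [of "z - w"] j.diff [of z w] by auto

lemma j_exp: "j (exp z) = exp (j z)"
proof -
  have "j (exp z) = (\<Sum>n. j (z ^ n /\<^sub>R fact n))"
    unfolding exp_def by (rule j.suminf [OF summable_exp_generic])
  then show ?thesis
    by (simp add: exp_def j.scaleR j_power)
qed

lemma closed_range_j: "closed (range j)"
  by (intro complete_imp_closed complete_isometric_image [where e = 1])
    (simp_all add: bounded_linear_j norm_j complete_UNIV)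

end

lemma
  fixes v :: "'a::{real_algebra_1,comm_ring_1}"
  assumes "v ^ N = 1" and "N > 0"
  defines "p \<equiv> of_real (1 / real N) * (\<Sum>k<N. v ^ k)"
  shows averaged_powers_idempotent: "p * p = p"
    and averaged_powers_fixed: "v * p = p"
proof -
  define S where "S = (\<Sum>k<N. v ^ k)"
  have "v * S = S"
  proof -
    have "v * S = (\<Sum>k<N. v ^ Suc k)"
      by (simp add: S_def sum_distrib_left)
    also have "\<dots> = (\<Sum>k<Suc N. v ^ k) - 1"
      by (simp only: sum.lessThan_Suc_shift) simp
    also have "\<dots> = S"
      using assms(1) by (simp add: S_def)
    finally show ?thesis .
  qed
  then have power_S: "v ^ k * S = S" for k
    by (induct k) (simp_all add: mult.assoc)
  have S_square: "S * S = of_nat N * S"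
    unfolding S_def [of] sum_distrib_right power_S [unfolded S_def] by simp
  have "p * p = of_real (1 / real N) * (of_real (1 / real N) * (S * S))"
    by (simp add: p_def S_def [symmetric] mult_ac)
  also have "\<dots> = of_real (1 / real N) * ((of_real (1 / real N) * of_nat N) * S)"
    by (simp only: S_square mult.assoc)
  finally show "p * p = p"
    by (simp add: of_real_inverse_mult_of_nat [OF assms(2)] p_def S_def)
  show "v * p = p"
    using \<open>v * S = S\<close> unfolding p_def S_def [symmetric] by (metis mult.left_commute)
qed

lemma sum_powers_primitive_root_of_unity:
  fixes N k :: nat
  defines "\<omega> \<equiv> exp (2 * of_real pi * \<i> / of_nat N)"
  assumes "k < N"
  shows "(\<Sum>m<N. (\<omega> ^ k) ^ m) = (if k = 0 then of_nat N else 0)"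
proof -
  have \<omega>_power: "\<omega> ^ n = exp (2 * of_real pi * \<i> * of_nat n / of_nat N)" for n
    unfolding \<omega>_def exp_of_nat_mult [symmetric] by (simp add: field_simps)
  have "\<omega> ^ k \<noteq> 1" if "k \<noteq> 0"
    using assms(2) that complex_root_unity_eq_1 [of N k] by (auto simp: \<omega>_power dest: dvd_imp_le)
  moreover have "\<omega> ^ N = 1"
    using assms(2) complex_root_unity [of N 1] by (simp add: \<omega>_power)
  then have "(\<omega> ^ k) ^ N = 1"
    by (metis power_mult mult.commute power_one)
  ultimately show ?thesis
    by (simp add: sum_gp_strict)
qed

locale complex_algebra_without_idempotents = complex_structure_algebra j
  for j :: "complex \<Rightarrow> 'a::{real_normed_algebra_1,comm_ring_1,banach}" +
  assumes idempotent_trivial: "\<And>p::'a. p * p = p \<Longrightarrow> p = 0 \<or> p = 1"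
begin

text \<open>For \<open>u ^ N = 1\<close> and \<open>\<omega>\<close> a primitive \<open>N\<close>-th root of unity, the averages \<open>p m\<close> of the
  powers of \<open>\<omega>\<^sup>m u\<close> are idempotents summing to \<open>1\<close>, so one of them is \<open>1\<close>, which forces
  \<open>\<omega>\<^sup>m u = 1\<close>.\<close>

lemma root_of_unity_in_range_j:
  assumes "N > 0" and "u ^ N = 1"
  shows "u \<in> range j"
proof -
  define \<omega> :: complex where "\<omega> = exp (2 * of_real pi * \<i> / of_nat N)"
  define v where "v m = j (\<omega> ^ m) * u" for m
  define p where "p m = of_real (1 / real N) * (\<Sum>k<N. v m ^ k)" for m
  have "\<omega> ^ N = 1"
    using assms(1) complex_root_unity [of N 1] by (simp add: \<omega>_def exp_of_nat_mult [symmetric])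
  then have "(\<omega> ^ m) ^ N = 1" for m
    by (metis power_mult mult.commute power_one)
  then have v_root: "v m ^ N = 1" for m
    using assms(2) by (simp add: v_def power_mult_distrib flip: j_power)
  have "(\<Sum>m<N. \<Sum>k<N. v m ^ k) = (\<Sum>k<N. j (\<Sum>m<N. (\<omega> ^ k) ^ m) * u ^ k)"
    by (subst sum.swap)
      (simp add: v_def power_mult_distrib j.sum j_power sum_distrib_left sum_distrib_right
        mult.commute flip: power_mult)
  also have "\<dots> = (\<Sum>k<N. if k = 0 then of_nat N else 0)"
    by (intro sum.cong refl) (simp add: sum_powers_primitive_root_of_unity \<omega>_def j_of_nat)
  also have "\<dots> = of_nat N"
    using assms(1) by simp
  finally have "(\<Sum>m<N. p m) = of_real (1 / real N) * of_nat N"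
    by (simp add: p_def sum_distrib_left [symmetric])
  also have "\<dots> = 1"
    using assms(1) by (rule of_real_inverse_mult_of_nat)
  finally have "(\<Sum>m<N. p m) \<noteq> 0"
    by simp
  then obtain m where "p m \<noteq> 0"
    by (meson sum.neutral)
  then have "p m = 1"
    using idempotent_trivial averaged_powers_idempotent [OF v_root assms(1)] by (auto simp: p_def)
  then have "v m = 1"
    using averaged_powers_fixed [OF v_root assms(1), of m] by (metis mult.right_neutral p_def)
  then have "j (\<omega> ^ m) * u = 1"
    by (simp add: v_def)
  then have "j (inverse (\<omega> ^ m)) = j (inverse (\<omega> ^ m) * \<omega> ^ m) * u"
    by (simp add: j_mult mult.assoc)
  then have "u = j (inverse (\<omega> ^ m))"
    by (simp add: \<omega>_def)
  then show ?thesis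
    by blast
qed

end

context complex_algebra_without_idempotents
begin

text \<open>\<open>d\<close> is the limit of \<open>K (exp (d/K) - 1)\<close>, and \<open>exp (d/K)\<close> is a \<open>K\<close>-th root of unity.\<close>

lemma exp_eq_1_imp_in_range_j:
  assumes "exp d = 1"
  shows "d \<in> range j"
proof -
  define q where "q K = real K *\<^sub>R (exp ((1 / real K) *\<^sub>R d) - 1)" for K :: nat
  have q_scalar: "q K \<in> range j" for K
  proof (cases "K = 0")
    case False
    then have "exp ((1 / real K) *\<^sub>R d) ^ K = 1"
      using exp_nth_root_comm [of K d] assms by simp
    then have "exp ((1 / real K) *\<^sub>R d) \<in> range j"
      using False by (intro root_of_unity_in_range_j) auto
    then obtain \<zeta> where "exp ((1 / real K) *\<^sub>R d) = j \<zeta>"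
      by (rule rangeE)
    then have "q K = j (real K *\<^sub>R (\<zeta> - 1))"
      by (simp add: q_def j.scaleR j.diff)
    then show ?thesis
      by simp
  qed (auto simp: q_def intro: range_eqI [of _ _ 0])
  have q_approx: "norm (q K - d) \<le> norm d ^ 2 / real K" if "norm d \<le> real K" "K > 0" for K
  proof -
    let ?x = "(1 / real K) *\<^sub>R d"
    have "q K - d = real K *\<^sub>R (exp ?x - 1 - ?x)"
      using that(2) by (simp add: q_def scaleR_diff_right)
    then have "norm (q K - d) = real K * norm (exp ?x - 1 - ?x)"
      by simp
    also have "\<dots> \<le> real K * norm ?x ^ 2"
      using that by (intro mult_left_mono norm_exp_minus_one_minus_le) (simp_all add: field_simps)
    also have "\<dots> = norm d ^ 2 / real K"
      by (simp add: power2_eq_square field_simps)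
    finally show ?thesis .
  qed
  obtain K0 :: nat where K0: "norm d \<le> real K0"
    using real_arch_simple by blast
  have "eventually (\<lambda>K. norm (q K - d) \<le> norm d ^ 2 / real K) sequentially"
    unfolding eventually_sequentially
    by (rule exI [of _ "Suc K0"]) (use K0 q_approx in auto)
  then have "(\<lambda>K. q K - d) \<longlonglongrightarrow> 0"
    by (rule Lim_null_comparison) (rule lim_const_over_n)
  then have "q \<longlonglongrightarrow> d"
    by (simp add: LIM_zero_iff)
  then show ?thesis
    using closed_range_j q_scalar closed_sequentially by blast
qed

lemma power_in_range_exp_imp_in_range_exp:
  fixes a :: 'a
  assumes "m > 0" and "a ^ m \<in> range exp"
  shows "a \<in> range exp"
proof -
  obtain b where b: "a ^ m = exp b"
    using assms(2) by blast
  define c where "c = (1 / real m) *\<^sub>R b"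
  have "(a * exp (- c)) ^ m = exp b * exp (- b)"
    using exp_nth_root_comm [OF assms(1), of "- b"] by (simp add: c_def power_mult_distrib b)
  then have "(a * exp (- c)) ^ m = 1"
    by (simp add: exp_minus_inverse)
  moreover from this obtain \<zeta> where \<zeta>: "a * exp (- c) = j \<zeta>"
    using root_of_unity_in_range_j [OF assms(1)] by (metis rangeE)
  ultimately have "\<zeta> \<noteq> 0"
    using assms(1) by (auto simp: power_0_left)
  have "a = a * exp (- c) * exp c"
    by (simp add: mult.assoc mult.commute [of "exp (- c)"] exp_minus_inverse)
  also have "\<dots> = exp (j (Ln \<zeta>) + c)"
    using \<open>\<zeta> \<noteq> 0\<close> by (simp add: \<zeta> exp_add_comm flip: j_exp)
  finally show ?thesis
    by (metis rangeI)
qed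

end

section \<open>Characters of finite abelian groups\<close>

fun nsmul :: "nat \<Rightarrow> 'g::ab_group_add \<Rightarrow> 'g" where
  "nsmul 0 x = 0"
| "nsmul (Suc k) x = x + nsmul k x"

lemma nsmul_add: "nsmul (m + n) x = nsmul m x + nsmul n x"
  by (induct m) (simp_all add: add.assoc)

lemma nsmul_mult: "nsmul (m * n) x = nsmul m (nsmul n x)"
  by (induct m) (simp_all add: nsmul_add)

lemma nsmul_zero [simp]: "nsmul k 0 = 0"
  by (induct k) simp_all

lemma nsmul_finite_order:
  fixes x :: "'g::{finite,ab_group_add}"
  obtains n where "n > 0" and "nsmul n x = 0"
proof -
  have "finite (range (\<lambda>k. nsmul k x))"
    by simp
  then have "\<not> inj (\<lambda>k. nsmul k x)"
    using finite_imageD infinite_UNIV_nat by blast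
  then obtain m n where "m < n" and "nsmul m x = nsmul n x"
    unfolding inj_def by (metis linorder_neqE_nat)
  then have "nsmul (n - m) x = 0"
    using nsmul_add [of m "n - m" x] by simp
  with \<open>m < n\<close> show ?thesis
    using that [of "n - m"] by simp
qed

definition add_subgroup :: "'g::ab_group_add set \<Rightarrow> bool" where
  "add_subgroup H \<longleftrightarrow> 0 \<in> H \<and> (\<forall>x\<in>H. \<forall>y\<in>H. x + y \<in> H) \<and> (\<forall>x\<in>H. - x \<in> H)"

definition character_on :: "'g::ab_group_add set \<Rightarrow> ('g \<Rightarrow> complex) \<Rightarrow> bool" where
  "character_on H \<psi> \<longleftrightarrow> (\<forall>x\<in>H. \<forall>y\<in>H. \<psi> (x + y) = \<psi> x * \<psi> y) \<and> (\<forall>x\<in>H. \<psi> x \<noteq> 0)"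

abbreviation character :: "('g::ab_group_add \<Rightarrow> complex) \<Rightarrow> bool" where
  "character \<equiv> character_on UNIV"

lemma add_subgroup_nsmul: "add_subgroup H \<Longrightarrow> x \<in> H \<Longrightarrow> nsmul k x \<in> H"
  by (induct k) (auto simp: add_subgroup_def)

lemma add_subgroup_diff: "add_subgroup H \<Longrightarrow> x \<in> H \<Longrightarrow> y \<in> H \<Longrightarrow> x - y \<in> H"
  unfolding add_subgroup_def by (metis diff_conv_add_uminus)

lemma character_on_0: "add_subgroup H \<Longrightarrow> character_on H \<psi> \<Longrightarrow> \<psi> 0 = 1"
  unfolding add_subgroup_def character_on_def by (metis add_0 mult_cancel_right1)

lemma character_on_nsmul:
  "add_subgroup H \<Longrightarrow> character_on H \<psi> \<Longrightarrow> x \<in> H \<Longrightarrow> \<psi> (nsmul k x) = \<psi> x ^ k"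
  by (induct k) (auto simp: character_on_0 character_on_def add_subgroup_nsmul)

lemma character_on_diff:
  assumes "add_subgroup H" "character_on H \<psi>" "x \<in> H" "y \<in> H"
  shows "\<psi> y = \<psi> x * \<psi> (y - x)"
proof -
  have "\<psi> (x + (y - x)) = \<psi> x * \<psi> (y - x)"
    using assms add_subgroup_diff [OF assms(1) assms(4,3)] unfolding character_on_def by blast
  then show ?thesis
    by simp
qed

lemma character_add: "character \<psi> \<Longrightarrow> \<psi> (x + y) = \<psi> x * \<psi> y"
  by (simp add: character_on_def)

lemma character_0: "character \<psi> \<Longrightarrow> \<psi> 0 = 1"
  by (rule character_on_0) (simp_all add: add_subgroup_def)

lemma character_nsmul: "character \<psi> \<Longrightarrow> \<psi> (nsmul k x) = \<psi> x ^ k"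
  using character_on_nsmul [of UNIV \<psi> x k] by (simp add: add_subgroup_def)

definition relative_order :: "'g::ab_group_add set \<Rightarrow> 'g \<Rightarrow> nat" where
  "relative_order H x = (LEAST d. d > 0 \<and> nsmul d x \<in> H)"

lemma
  fixes x :: "'g::{finite,ab_group_add}"
  assumes "add_subgroup H"
  shows relative_order_pos: "relative_order H x > 0"
    and nsmul_relative_order: "nsmul (relative_order H x) x \<in> H"
proof -
  obtain n where "n > 0" "nsmul n x = 0"
    by (rule nsmul_finite_order)
  then have "\<exists>d. d > 0 \<and> nsmul d x \<in> H"
    using assms by (auto simp: add_subgroup_def)
  then have "relative_order H x > 0 \<and> nsmul (relative_order H x) x \<in> H"
    unfolding relative_order_def by (rule LeastI_ex)
  then show "relative_order H x > 0" "nsmul (relative_order H x) x \<in> H"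
    by auto
qed

lemma relative_order_dvd:
  fixes x :: "'g::{finite,ab_group_add}"
  assumes H: "add_subgroup H" and m: "nsmul m x \<in> H"
  shows "relative_order H x dvd m"
proof -
  define d where "d = relative_order H x"
  have "nsmul m x = nsmul (m mod d) x + nsmul (m div d) (nsmul d x)"
    using nsmul_add [of "m mod d" "m div d * d" x] by (simp add: nsmul_mult mod_div_mult_eq)
  then have "nsmul (m mod d) x = nsmul m x - nsmul (m div d) (nsmul d x)"
    by (metis add_diff_cancel_right')
  also have "\<dots> \<in> H"
    using add_subgroup_nsmul [OF H nsmul_relative_order [OF H]] by (simp add: H m d_def add_subgroup_diff)
  finally have "nsmul (m mod d) x \<in> H" .
  moreover have "m mod d < d"
    using relative_order_pos [OF H] by (simp add: d_def)
  then have "\<not> (m mod d > 0 \<and> nsmul (m mod d) x \<in> H)"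
    unfolding d_def relative_order_def by (rule not_less_Least)
  ultimately have "m mod d = 0"
    by simp
  then show ?thesis
    by (simp add: d_def mod_eq_0_iff_dvd)
qed

context
  fixes H :: "'g::{finite,ab_group_add} set" and \<phi> :: "'g \<Rightarrow> complex" and x :: 'g and q :: complex
  assumes H: "add_subgroup H" and \<phi>: "character_on H \<phi>"
    and q: "q ^ relative_order H x = \<phi> (nsmul (relative_order H x) x)"
begin

lemma character_on_nsmul_relative_order:
  assumes "nsmul m x \<in> H"
  shows "\<phi> (nsmul m x) = q ^ m"
proof -
  define d where "d = relative_order H x"
  obtain t where m: "m = t * d"
    using relative_order_dvd [OF H assms] unfolding d_def by (metis dvd_def mult.commute)
  have "\<phi> (nsmul m x) = \<phi> (nsmul d x) ^ t"
    using nsmul_relative_order [OF H]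
    by (simp add: m nsmul_mult character_on_nsmul [OF H \<phi>] d_def)
  also have "\<dots> = q ^ m"
    by (metis q [folded d_def] m mult.commute power_mult)
  finally show ?thesis .
qed

lemma extension_well_defined:
  assumes "h \<in> H" "h' \<in> H" and "h + nsmul k x = h' + nsmul k' x" and "k' \<le> k"
  shows "\<phi> h * q ^ k = \<phi> h' * q ^ k'"
proof -
  have "nsmul (k - k') x = h' - h"
    using assms(3,4) nsmul_add [of k' "k - k'" x] by (simp add: algebra_simps)
  then have "\<phi> (h' - h) = q ^ (k - k')"
    using character_on_nsmul_relative_order add_subgroup_diff [OF H assms(2,1)] by metis
  then have "\<phi> h' = \<phi> h * q ^ (k - k')"
    using character_on_diff [OF H \<phi> assms(1,2)] by simp
  then show ?thesis
    using assms(4) by (simp add: mult.assoc flip: power_add)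
qed

lemma character_on_extend_step:
  obtains H' \<phi>' where "add_subgroup H'" "character_on H' \<phi>'" "H \<subseteq> H'" "x \<in> H'"
    "\<forall>h\<in>H. \<phi>' h = \<phi> h" "\<phi>' x = q"
proof -
  define H' where "H' = {h + nsmul k x | h k. h \<in> H}"
  define \<phi>' where "\<phi>' y = (SOME v. \<exists>h k. h \<in> H \<and> y = h + nsmul k x \<and> v = \<phi> h * q ^ k)" for y
  have \<phi>'_eq: "\<phi>' (h + nsmul k x) = \<phi> h * q ^ k" if "h \<in> H" for h k
  proof -
    have "\<exists>h' k'. h' \<in> H \<and> h + nsmul k x = h' + nsmul k' x \<and> \<phi>' (h + nsmul k x) = \<phi> h' * q ^ k'"
      unfolding \<phi>'_def by (rule someI_ex) (use that in blast)
    then show ?thesis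
      using extension_well_defined that by (metis nat_le_linear)
  qed
  obtain n where n: "n > 0" "nsmul n x = 0"
    by (rule nsmul_finite_order)
  have closed_add: "y + z \<in> H' \<and> \<phi>' (y + z) = \<phi>' y * \<phi>' z" if yz: "y \<in> H'" "z \<in> H'" for y z
  proof -
    obtain h k h' k' where y: "y = h + nsmul k x" "h \<in> H" and z: "z = h' + nsmul k' x" "h' \<in> H"
      using yz unfolding H'_def by blast
    have sum: "y + z = (h + h') + nsmul (k + k') x"
      using y z by (simp add: nsmul_add algebra_simps)
    have sum_in: "h + h' \<in> H"
      using y z H by (simp add: add_subgroup_def)
    have "\<phi>' (y + z) = \<phi> (h + h') * q ^ (k + k')"
      by (simp add: sum \<phi>'_eq sum_in)
    also have "\<dots> = \<phi>' y * \<phi>' z"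
      using y z \<phi> by (simp add: \<phi>'_eq character_on_def power_add mult_ac)
    finally show ?thesis
      using sum sum_in unfolding H'_def by blast
  qed
  have "- y \<in> H'" if y_in: "y \<in> H'" for y
  proof -
    obtain h k where y: "y = h + nsmul k x" "h \<in> H"
      using y_in unfolding H'_def by blast
    have "nsmul ((n - 1) * k) x + nsmul k x = nsmul (n * k) x"
      using n by (simp flip: nsmul_add add: algebra_simps)
    also have "\<dots> = 0"
      by (simp add: mult.commute nsmul_mult n)
    finally have "- nsmul k x = nsmul ((n - 1) * k) x"
      by (metis add.commute minus_unique)
    then have "- y = - h + nsmul ((n - 1) * k) x"
      by (simp add: y)
    then show ?thesis
      using y H unfolding H'_def add_subgroup_def by blast
  qed
  moreover have "0 \<in> H'" and "H \<subseteq> H'" and "x \<in> H'"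
    using H unfolding H'_def add_subgroup_def by (force intro: exI [of _ 0] exI [of _ 1])+
  ultimately have "add_subgroup H'"
    using closed_add unfolding add_subgroup_def by blast
  moreover have "q \<noteq> 0"
    using q \<phi> nsmul_relative_order [OF H, of x] relative_order_pos [OF H, of x]
    by (auto simp: character_on_def power_0_left)
  then have "character_on H' \<phi>'"
    using closed_add \<phi> unfolding character_on_def H'_def by (auto simp: \<phi>'_eq)
  moreover have "\<forall>h\<in>H. \<phi>' h = \<phi> h"
    using \<phi>'_eq [of _ 0] by simp
  moreover have "\<phi>' x = q"
    using \<phi>'_eq [of 0 1] H character_on_0 [OF H \<phi>] by (simp add: add_subgroup_def)
  ultimately show ?thesis
    using that \<open>H \<subseteq> H'\<close> \<open>x \<in> H'\<close> by blast
qed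

end

lemma character_on_extend:
  fixes H :: "'g::{finite,ab_group_add} set"
  assumes "add_subgroup H" and "character_on H \<phi>"
  obtains \<psi> where "character \<psi>" and "\<forall>h\<in>H. \<psi> h = \<phi> h"
  using assms
proof (induct "card (UNIV - H)" arbitrary: H \<phi> rule: less_induct)
  case less
  show ?case
  proof (cases "H = UNIV")
    case True
    then show ?thesis
      using less.prems by blast
  next
    case False
    then obtain x where "x \<notin> H"
      by blast
    define d where "d = relative_order H x"
    have "\<phi> (nsmul d x) \<noteq> 0" and "d > 0"
      using less.prems(2,3) nsmul_relative_order [OF less.prems(2), of x]
        relative_order_pos [OF less.prems(2), of x]
      by (auto simp: d_def character_on_def)
    define q where "q = exp (Ln (\<phi> (nsmul d x)) / of_nat d)"
    have "q ^ d = \<phi> (nsmul d x)"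
      using \<open>\<phi> (nsmul d x) \<noteq> 0\<close> \<open>d > 0\<close> by (simp add: q_def flip: exp_of_nat_mult)
    then obtain H' \<phi>' where H': "add_subgroup H'" "character_on H' \<phi>'" "H \<subseteq> H'" "x \<in> H'"
      "\<forall>h\<in>H. \<phi>' h = \<phi> h"
      using character_on_extend_step [OF less.prems(2,3)] by (metis d_def)
    have "card (UNIV - H') < card (UNIV - H)"
      using H'(3,4) \<open>x \<notin> H\<close> by (intro psubset_card_mono) auto
    then show ?thesis
    proof (rule less.hyps [OF _ _ H'(1,2)])
      fix \<psi> assume \<psi>: "character \<psi>" "\<forall>h\<in>H'. \<psi> h = \<phi>' h"
      then have "\<forall>h\<in>H. \<psi> h = \<phi> h"
        using H'(3,5) by auto
      then show ?thesis
        by (rule less.prems(1) [OF \<psi>(1)])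
    qed
  qed
qed

lemma characters_separate_points:
  fixes g :: "'g::{finite,ab_group_add}"
  assumes "g \<noteq> 0"
  obtains \<psi> where "character \<psi>" and "\<psi> g \<noteq> 1"
proof -
  have trivial: "add_subgroup {0::'g}" "character_on {0::'g} (\<lambda>_. 1)"
    by (simp_all add: add_subgroup_def character_on_def)
  define d where "d = relative_order {0} g"
  have "d > 0" and "d \<noteq> 1"
    using relative_order_pos [OF trivial(1)] nsmul_relative_order [OF trivial(1), of g] assms
    by (auto simp: d_def)
  define q where "q = exp (2 * of_real pi * \<i> * of_nat 1 / of_nat d)"
  have "q ^ d = 1"
    using \<open>d > 0\<close> complex_root_unity [of d 1] by (simp add: q_def)
  moreover have "q \<noteq> 1"
    using \<open>d > 0\<close> \<open>d \<noteq> 1\<close> complex_root_unity_eq_1 [of d 1] by (simp add: q_def)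
  ultimately obtain H' \<phi>' where H': "add_subgroup H'" "character_on H' \<phi>'" "g \<in> H'" "\<phi>' g = q"
    using character_on_extend_step [OF trivial, where x = g and q = q] by (metis d_def)
  obtain \<psi> where "character \<psi>" and "\<forall>h\<in>H'. \<psi> h = \<phi>' h"
    by (rule character_on_extend [OF H'(1,2)])
  then show ?thesis
    using that H'(3,4) \<open>q \<noteq> 1\<close> by simp
qed

section \<open>Gradings and their twists by characters\<close>

lemma sum_UNIV_shift:
  fixes f :: "'g::{finite,ab_group_add} \<Rightarrow> 'b::comm_monoid_add"
  shows "(\<Sum>l\<in>UNIV. f (l - k)) = (\<Sum>l\<in>UNIV. f l)"
  by (rule sum.reindex_bij_witness [of _ "\<lambda>l. l + k" "\<lambda>l. l - k"]) auto

locale graded_algebra = complex_structure_algebra j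
  for j :: "complex \<Rightarrow> 'a::{real_normed_algebra_1,comm_ring_1,banach}" +
  fixes Ag :: "'g::{finite,ab_group_add} \<Rightarrow> 'a set"
  assumes graded: "graded_structure j Ag"
begin

lemma closed_Ag: "closed (Ag h)"
  and zero_in_Ag: "0 \<in> Ag h"
  and add_in_Ag: "x \<in> Ag h \<Longrightarrow> y \<in> Ag h \<Longrightarrow> x + y \<in> Ag h"
  and j_mult_in_Ag: "x \<in> Ag h \<Longrightarrow> j z * x \<in> Ag h"
  and mult_in_Ag: "x \<in> Ag g \<Longrightarrow> y \<in> Ag h \<Longrightarrow> x * y \<in> Ag (g + h)"
  and graded_decomposition: "\<exists>!f. (\<forall>g. f g \<in> Ag g) \<and> x = (\<Sum>g\<in>UNIV. f g)"
  using graded unfolding graded_structure_def by blast+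

lemma diff_in_Ag: "x \<in> Ag h \<Longrightarrow> y \<in> Ag h \<Longrightarrow> x - y \<in> Ag h"
  using add_in_Ag [of x h "- y"] j_mult_in_Ag [of y h "- 1"] by (simp add: j.neg)

lemma scaleR_in_Ag: "x \<in> Ag h \<Longrightarrow> r *\<^sub>R x \<in> Ag h"
  using j_mult_in_Ag [of x h "complex_of_real r"] by (simp add: j_of_real scaleR_conv_of_real)

lemma sum_in_Ag: "(\<And>i. i \<in> I \<Longrightarrow> f i \<in> Ag h) \<Longrightarrow> sum f I \<in> Ag h"
  by (induct I rule: infinite_finite_induct) (auto simp: zero_in_Ag add_in_Ag)

definition component :: "'a \<Rightarrow> 'g \<Rightarrow> 'a" where
  "component x = (THE f. (\<forall>g. f g \<in> Ag g) \<and> x = (\<Sum>g\<in>UNIV. f g))"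

lemma component_in_Ag: "component x g \<in> Ag g"
  and sum_component: "(\<Sum>g\<in>UNIV. component x g) = x"
  using theI' [OF graded_decomposition [of x]] unfolding component_def by auto

lemma component_unique: "(\<And>g. f g \<in> Ag g) \<Longrightarrow> x = (\<Sum>g\<in>UNIV. f g) \<Longrightarrow> component x = f"
  using graded_decomposition [of x] component_in_Ag sum_component by metis

lemma component_homogeneous: "x \<in> Ag h \<Longrightarrow> component x = (\<lambda>k. if k = h then x else 0)"
  by (rule component_unique) (auto simp: zero_in_Ag)

lemma component_diff: "component (x - y) = (\<lambda>h. component x h - component y h)"
  by (rule component_unique) (simp_all add: diff_in_Ag component_in_Ag sum_subtractf sum_component)

lemma component_mult: "component (x * y) = (\<lambda>l. \<Sum>k\<in>UNIV. component x k * component y (l - k))"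
proof (rule component_unique)
  show "(\<Sum>k\<in>UNIV. component x k * component y (l - k)) \<in> Ag l" for l
  proof (rule sum_in_Ag)
    show "component x k * component y (l - k) \<in> Ag l" for k
      using mult_in_Ag [OF component_in_Ag component_in_Ag, of x k y "l - k"] by simp
  qed
  have "x * y = (\<Sum>k\<in>UNIV. \<Sum>l\<in>UNIV. component x k * component y l)"
    by (simp add: sum_component flip: sum_product)
  also have "\<dots> = (\<Sum>k\<in>UNIV. \<Sum>l\<in>UNIV. component x k * component y (l - k))"
    by (rule sum.cong [OF refl], rule sum_UNIV_shift [symmetric])
  finally show "x * y = (\<Sum>l\<in>UNIV. \<Sum>k\<in>UNIV. component x k * component y (l - k))"
    by (subst sum.swap)
qed

text \<open>The unit lies in \<open>A\<^sub>0\<close>: its degree-0 component \<open>e\<close> is a unit for every homogeneous element,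
  hence \<open>e = e \<cdot> 1 = 1\<close>.\<close>

lemma one_in_Ag_0: "1 \<in> Ag 0"
proof -
  define e where "e = component 1"
  have e0: "e 0 * y = y" if y: "y \<in> Ag h" for y h
  proof -
    have "component y = (\<lambda>l. e (l - h) * y)"
    proof (rule component_unique)
      show "e (l - h) * y \<in> Ag l" for l
        using mult_in_Ag [OF component_in_Ag y, of 1 "l - h"] by (simp add: e_def)
      have "(\<Sum>l\<in>UNIV. e (l - h) * y) = (\<Sum>l\<in>UNIV. e l * y)"
        by (rule sum_UNIV_shift)
      then show "y = (\<Sum>l\<in>UNIV. e (l - h) * y)"
        by (simp add: e_def sum_component flip: sum_distrib_right)
    qed
    then show ?thesis
      using component_homogeneous [OF y] by (metis diff_self)
  qed
  have "e 0 = e 0 * (\<Sum>g\<in>UNIV. e g)"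
    by (simp add: e_def sum_component)
  also have "\<dots> = (\<Sum>g\<in>UNIV. e g)"
    using e0 [OF component_in_Ag [of 1]] by (simp add: sum_distrib_left e_def)
  also have "\<dots> = 1"
    by (simp add: e_def sum_component)
  finally show ?thesis
    using component_in_Ag [of 1 0] by (simp add: e_def)
qed

lemma j_in_Ag_0: "j z \<in> Ag 0"
  using j_mult_in_Ag [OF one_in_Ag_0, of z] by simp

lemma power_in_Ag: "y \<in> Ag h \<Longrightarrow> y ^ n \<in> Ag (nsmul n h)"
  by (induct n) (simp_all add: one_in_Ag_0 mult_in_Ag)

definition twist :: "('g \<Rightarrow> complex) \<Rightarrow> 'a \<Rightarrow> 'a" where
  "twist \<psi> x = (\<Sum>h\<in>UNIV. j (\<psi> h) * component x h)"

lemma component_twist: "component (twist \<psi> x) = (\<lambda>h. j (\<psi> h) * component x h)"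
  by (rule component_unique) (simp_all add: j_mult_in_Ag component_in_Ag twist_def)

lemma twist_homogeneous: "y \<in> Ag h \<Longrightarrow> twist \<psi> y = j (\<psi> h) * y"
  by (simp add: twist_def component_homogeneous if_distrib cong: if_cong)

context
  fixes \<psi> :: "'g \<Rightarrow> complex"
  assumes \<psi>: "character \<psi>"
begin

lemma twist_one: "twist \<psi> 1 = 1"
  using twist_homogeneous [OF one_in_Ag_0] by (simp add: character_0 [OF \<psi>])

lemma twist_mult: "twist \<psi> (x * y) = twist \<psi> x * twist \<psi> y"
proof -
  let ?x = "\<lambda>k. j (\<psi> k) * component x k" and ?y = "\<lambda>k. j (\<psi> k) * component y k"
  have \<psi>_split: "\<psi> l = \<psi> k * \<psi> (l - k)" for k l
    using character_add [OF \<psi>, of k "l - k"] by simp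
  have "twist \<psi> (x * y) = (\<Sum>l\<in>UNIV. \<Sum>k\<in>UNIV. j (\<psi> l) * (component x k * component y (l - k)))"
    by (simp add: twist_def component_mult sum_distrib_left)
  also have "\<dots> = (\<Sum>l\<in>UNIV. \<Sum>k\<in>UNIV. ?x k * ?y (l - k))"
    apply (intro sum.cong refl)
    subgoal for l k
      by (subst \<psi>_split [of l k]) (simp add: j_mult mult_ac)
    done
  also have "\<dots> = (\<Sum>k\<in>UNIV. ?x k * (\<Sum>l\<in>UNIV. ?y (l - k)))"
    by (subst sum.swap) (simp add: sum_distrib_left)
  also have "\<dots> = twist \<psi> x * twist \<psi> y"
    by (simp add: sum_UNIV_shift [of ?y] twist_def sum_distrib_right)
  finally show ?thesis .
qed

lemma twist_prod: "twist \<psi> (prod f I) = (\<Prod>i\<in>I. twist \<psi> (f i))"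
  by (induct I rule: infinite_finite_induct) (simp_all add: twist_one twist_mult)

lemma component_0_twist_diff: "component (twist \<psi> b - b) 0 = 0"
  by (simp add: component_diff component_twist character_0 [OF \<psi>])

text \<open>The \<open>n\<close>-th term of the exponential series of \<open>y \<in> A\<^sub>h\<close> has degree \<open>n h\<close>; summing the
  terms degree by degree gives the homogeneous components of \<open>exp y\<close>.\<close>

lemma twist_exp_homogeneous:
  assumes y: "y \<in> Ag h"
  shows "twist \<psi> (exp y) = exp (j (\<psi> h) * y)"
proof -
  define f where "f r n = (if nsmul n h = r then y ^ n /\<^sub>R fact n else 0)" for r n
  have summable_f: "summable (f r)" for r
  proof (rule summable_norm_cancel, rule summable_comparison_test [OF _ summable_norm_exp [of y]])
    show "\<exists>N. \<forall>n\<ge>N. norm (norm (f r n)) \<le> norm (y ^ n /\<^sub>R fact n)"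
      by (auto simp: f_def)
  qed
  have "suminf (f r) \<in> Ag r" for r
    using power_in_Ag [OF y]
    by (intro closed_sequentially [OF closed_Ag _ summable_LIMSEQ [OF summable_f]])
      (auto intro!: sum_in_Ag simp: f_def zero_in_Ag scaleR_in_Ag)
  moreover have "exp y = (\<Sum>r\<in>UNIV. suminf (f r))"
    by (simp add: exp_def f_def suminf_sum [OF summable_f, symmetric])
  ultimately have "component (exp y) = (\<lambda>r. suminf (f r))"
    by (rule component_unique)
  then have "twist \<psi> (exp y) = (\<Sum>n. \<Sum>r\<in>UNIV. j (\<psi> r) * f r n)"
    by (simp add: twist_def suminf_mult [OF summable_f] suminf_sum summable_mult [OF summable_f])
  also have "\<dots> = (\<Sum>n. (j (\<psi> h) * y) ^ n /\<^sub>R fact n)"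
    by (simp add: f_def if_distrib character_nsmul [OF \<psi>] j_power power_mult_distrib
        cong: if_cong)
  finally show ?thesis
    by (simp add: exp_def)
qed

lemma twist_exp: "twist \<psi> (exp x) = exp (twist \<psi> x)"
proof -
  have "twist \<psi> (exp x) = twist \<psi> (exp (\<Sum>h\<in>UNIV. component x h))"
    by (simp only: sum_component)
  also have "\<dots> = (\<Prod>h\<in>UNIV. twist \<psi> (exp (component x h)))"
    by (simp add: exp_sum twist_prod)
  also have "\<dots> = (\<Prod>h\<in>UNIV. exp (j (\<psi> h) * component x h))"
    by (intro prod.cong refl twist_exp_homogeneous component_in_Ag)
  also have "\<dots> = exp (twist \<psi> x)"
    by (simp add: twist_def exp_sum)
  finally show ?thesis .
qed

end

end

locale graded_algebra_without_idempotents =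
  graded_algebra j Ag + complex_algebra_without_idempotents j
  for j :: "complex \<Rightarrow> 'a::{real_normed_algebra_1,comm_ring_1,banach}"
    and Ag :: "'g::{finite,ab_group_add} \<Rightarrow> 'a set"
begin

text \<open>If \<open>exp b\<close> is homogeneous of degree \<open>g\<close>, then \<open>exp (twist \<psi> b - b) = \<psi> g\<close> is a scalar, so
  \<open>twist \<psi> b - b\<close> is a scalar; having no degree-0 component, it vanishes, and \<open>\<psi> g = 1\<close>.\<close>

lemma exp_in_Ag_imp_character_trivial:
  assumes \<psi>: "character \<psi>" and "exp b \<in> Ag g"
  shows "\<psi> g = 1"
proof -
  define \<omega> where "\<omega> = \<psi> g"
  have "\<omega> \<noteq> 0"
    using \<psi> by (simp add: character_on_def \<omega>_def)
  have twist_b: "exp (twist \<psi> b) = j \<omega> * exp b"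
    using twist_exp [OF \<psi>, of b] twist_homogeneous [OF assms(2), of \<psi>] by (simp add: \<omega>_def)
  define c where "c = twist \<psi> b - b - j (Ln \<omega>)"
  have "exp c = exp (twist \<psi> b) * exp (- b) * exp (- j (Ln \<omega>))"
    unfolding c_def diff_conv_add_uminus exp_add_comm ..
  also have "\<dots> = j \<omega> * exp b * exp (- b) * j (exp (- Ln \<omega>))"
    by (simp only: twist_b j_exp j.neg)
  also have "\<dots> = 1"
    using \<open>\<omega> \<noteq> 0\<close> by (simp add: mult.assoc exp_minus_inverse exp_minus flip: j_mult)
  finally obtain \<mu> where "c = j \<mu>"
    using exp_eq_1_imp_in_range_j by blast
  then have twist_diff: "twist \<psi> b - b = j (\<mu> + Ln \<omega>)"
    by (simp add: c_def j_add algebra_simps)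
  then have "j (\<mu> + Ln \<omega>) = 0"
    using component_0_twist_diff [OF \<psi>, of b] component_homogeneous [OF j_in_Ag_0] by simp
  then have "exp b = j \<omega> * exp b"
    using twist_b twist_diff by simp
  then have "exp b * exp (- b) = j \<omega> * (exp b * exp (- b))"
    by (simp add: mult.assoc [symmetric])
  then have "j \<omega> = j 1"
    by (simp add: exp_minus_inverse)
  then show ?thesis
    by (simp only: j_eq_iff \<omega>_def)
qed

lemma power_notin_principal_component:
  assumes "character \<psi>" and "\<psi> g \<noteq> 1" and "a \<in> Ag g" and "m > 0"
  shows "a ^ m \<notin> principal_component"
proof
  assume "a ^ m \<in> principal_component"
  then have "a ^ m \<in> range exp"
    using principal_component_subset_range_exp ..
  then obtain b where "a = exp b"
    using power_in_range_exp_imp_in_range_exp [OF assms(4)] by blast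
  then show False
    using exp_in_Ag_imp_character_trivial [OF assms(1)] assms(2,3) by blast
qed

end

theorem corollary3:
  fixes j :: "complex \<Rightarrow> 'a::{real_normed_algebra_1,comm_ring_1,banach}"
    and Ag :: "'g::{finite,ab_group_add} \<Rightarrow> 'a set"
  assumes "complex_structure j"
    and "\<forall>p::'a. p * p = p \<longrightarrow> p = 0 \<or> p = 1"
    and "graded_structure j Ag"
    and "g \<noteq> 0" and "a \<in> Ag g" and "a \<in> invertibles"
  shows "infinite (invertibles_quotient :: 'a set set)"
proof -
  interpret graded_algebra_without_idempotents j Ag
    using assms(1-3) by unfold_locales auto
  obtain \<psi> where \<psi>: "character \<psi>" "\<psi> g \<noteq> 1"
    using characters_separate_points [OF assms(4)] .
  show ?thesis
    using power_notin_principal_component [OF \<psi> assms(5)]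
    by (rule infinite_invertibles_quotient [OF assms(6)])
qed

end
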